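(* Let $\mathcal{X}$ be a finite set with symmetric nonnegative weights $(w_{x,x'})$ summing to $1$, with $w_x:=\sum_{x'}w_{x,x'}>0$ for all $x$. Let $\boldsymbol{M}=(m_{x,x'})$ be any real margin matrix. For $f:\mathcal{X}\to\mathbb{R}^k$, define the margin tuning loss $$\mathcal{L}_{\mathrm{M}}(f)=-2\sum_{x,x'}w_{x,x'}f(x)^\top f(x')+\sum_{x,x'}w_xw_{x'}\big[f(x)^\top f(x')+m_{x,x'}\big]^2 .$$ Let $\boldsymbol{A}=(w_{x,x'})$, $\boldsymbol{D}=\mathrm{diag}(w_x)$, $\bar{\boldsymbol{A}}=\boldsymbol{D}^{-1/2}\boldsymbol{A}\boldsymbol{D}^{-1/2}$, and $\bar{\boldsymbol{M}}=\boldsymbol{D}^{1/2}\boldsymbol{M}\boldsymbol{D}^{1/2}$. Let $F$ be the matrix with rows $\sqrt{w_x}\,f(x)^\top$. Then there is a constant $C$, depending only on $(w_{x,x'})$ and $\boldsymbol{M}$ and not on $f$, such that for all $f$ $$\mathcal{L}_{\mathrm{M}}(f)=\|(\bar{\boldsymbol{A}}-\bar{\boldsymbol{M}})-FF^\top\|_F^2+C .$$ In particular, minimizing $\mathcal{L}_{\mathrm{M}}$ over $f$ is equivalent to minimizing $\|(\bar{\boldsymbol{A}}-\bar{\boldsymbol{M}})-FF^\top\|_F^2$ over $F$.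
   Context: $\|\cdot\|_F$ is the Frobenius norm. *)

theory Defs
  imports "HOL-Analysis.Analysis"
begin

definition deg :: "('x::finite \<Rightarrow> 'x \<Rightarrow> real) \<Rightarrow> 'x \<Rightarrow> real" where
  "deg w x = (\<Sum>x'\<in>UNIV. w x x')"

definition margin_loss ::
  "('x::finite \<Rightarrow> 'x \<Rightarrow> real) \<Rightarrow> ('x \<Rightarrow> 'x \<Rightarrow> real) \<Rightarrow> ('x \<Rightarrow> real^'k) \<Rightarrow> real" where
  "margin_loss w M f =
     - 2 * (\<Sum>x\<in>UNIV. \<Sum>x'\<in>UNIV. w x x' * (f x \<bullet> f x'))
     + (\<Sum>x\<in>UNIV. \<Sum>x'\<in>UNIV. deg w x * deg w x' * (f x \<bullet> f x' + M x x')\<^sup>2)"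

definition adj_mat :: "('x::finite \<Rightarrow> 'x \<Rightarrow> real) \<Rightarrow> real^'x^'x" where
  "adj_mat w = (\<chi> i j. w i j)"

definition deg_mat :: "('x::finite \<Rightarrow> 'x \<Rightarrow> real) \<Rightarrow> real^'x^'x" where
  "deg_mat w = (\<chi> i j. if i = j then deg w i else 0)"

definition deg_mat_pow :: "real \<Rightarrow> ('x::finite \<Rightarrow> 'x \<Rightarrow> real) \<Rightarrow> real^'x^'x" where
  "deg_mat_pow p w = (\<chi> i j. if i = j then deg w i powr p else 0)"

definition norm_adj :: "('x::finite \<Rightarrow> 'x \<Rightarrow> real) \<Rightarrow> real^'x^'x" where
  "norm_adj w = deg_mat_pow (-1/2) w ** adj_mat w ** deg_mat_pow (-1/2) w"

definition norm_margin :: "('x::finite \<Rightarrow> 'x \<Rightarrow> real) \<Rightarrow> ('x \<Rightarrow> 'x \<Rightarrow> real) \<Rightarrow> real^'x^'x" where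
  "norm_margin w M = deg_mat_pow (1/2) w ** (\<chi> i j. M i j) ** deg_mat_pow (1/2) w"

definition emb_mat :: "('x::finite \<Rightarrow> 'x \<Rightarrow> real) \<Rightarrow> ('x \<Rightarrow> real^'k) \<Rightarrow> real^'k^'x" where
  "emb_mat w f = (\<chi> x. sqrt (deg w x) *\<^sub>R f x)"

definition frob_norm :: "real^'n::finite^'m::finite \<Rightarrow> real" where
  "frob_norm A = sqrt (\<Sum>i\<in>UNIV. \<Sum>j\<in>UNIV. (A $ i $ j)\<^sup>2)"

end

theory Submission
  imports Defs
begin

text \<open>With \<open>a = sqrt (w_x w_x')\<close>, the \<open>(x, x')\<close> entry of \<open>(Abar - Mbar) - F F^T\<close> is
  \<open>w_xx' / a - a m_xx' - a g\<close> where \<open>g = f(x)^T f(x')\<close>. Its square equals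
  \<open>-2 w_xx' g + a^2 (g + m_xx')^2\<close>, the summand of the margin loss, plus a term free of \<open>f\<close>;
  summing over all pairs gives the identity.\<close>

lemma matrix_mult_diag_left_nth:
  fixes A :: "'a::comm_semiring_1^'n^'m::finite"
  shows "((\<chi> i j. if i = j then d i else 0) ** A) $ i $ j = d i * A $ i $ j"
  by (simp add: matrix_matrix_mult_def if_distrib if_distribR cong: if_cong)

lemma matrix_mult_diag_right_nth:
  fixes A :: "'a::comm_semiring_1^'n::finite^'m"
  shows "(A ** (\<chi> i j. if i = j then d i else 0)) $ i $ j = A $ i $ j * d j"
  by (simp add: matrix_matrix_mult_def if_distrib if_distribR cong: if_cong)

lemma frob_norm_power2: "(frob_norm A)\<^sup>2 = (\<Sum>i\<in>UNIV. \<Sum>j\<in>UNIV. (A $ i $ j)\<^sup>2)"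
  unfolding frob_norm_def by (simp add: sum_nonneg)

lemma norm_adj_nth:
  assumes "0 \<le> deg w i" "0 \<le> deg w j"
  shows "norm_adj w $ i $ j = w i j / sqrt (deg w i * deg w j)"
  using assms
  by (simp add: norm_adj_def deg_mat_pow_def adj_mat_def matrix_mult_diag_left_nth
      matrix_mult_diag_right_nth powr_minus_divide powr_half_sqrt real_sqrt_mult)

lemma norm_margin_nth:
  assumes "0 \<le> deg w i" "0 \<le> deg w j"
  shows "norm_margin w M $ i $ j = sqrt (deg w i * deg w j) * M i j"
  using assms
  by (simp add: norm_margin_def deg_mat_pow_def matrix_mult_diag_left_nth
      matrix_mult_diag_right_nth powr_half_sqrt real_sqrt_mult)

lemma emb_mat_gram_nth:
  "(emb_mat w f ** transpose (emb_mat w f)) $ i $ j = sqrt (deg w i * deg w j) * (f i \<bullet> f j)"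
proof -
  have "row x (emb_mat w f) = sqrt (deg w x) *\<^sub>R f x" for x
    unfolding row_def emb_mat_def vec_lambda_beta vec_lambda_eta ..
  then show ?thesis
    by (simp add: matrix_mult_transpose_dot_row real_sqrt_mult)
qed

lemma square_residual_eq:
  fixes a g m v :: real
  assumes "a \<noteq> 0"
  shows "(v / a - a * m - a * g)\<^sup>2 = - 2 * (v * g) + a\<^sup>2 * (g + m)\<^sup>2 + ((v / a - a * m)\<^sup>2 - a\<^sup>2 * m\<^sup>2)"
  using assms by (simp add: power2_eq_square field_simps)

theorem theorem3:
  fixes w :: "'x::finite \<Rightarrow> 'x \<Rightarrow> real"
    and M :: "'x \<Rightarrow> 'x \<Rightarrow> real"
  assumes sym: "\<And>x x'. w x x' = w x' x"
    and nonneg: "\<And>x x'. w x x' \<ge> 0"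
    and total: "(\<Sum>x\<in>UNIV. \<Sum>x'\<in>UNIV. w x x') = 1"
    and pos: "\<And>x. deg w x > 0"
  shows "\<exists>C::real. \<forall>f :: 'x \<Rightarrow> real^'k.
           margin_loss w M f =
             (frob_norm ((norm_adj w - norm_margin w M) - emb_mat w f ** transpose (emb_mat w f)))\<^sup>2 + C"
proof -
  define a where "a i j = sqrt (deg w i * deg w j)" for i j
  define C where "C = (\<Sum>i\<in>UNIV. \<Sum>j\<in>UNIV. (a i j)\<^sup>2 * (M i j)\<^sup>2 - (w i j / a i j - a i j * M i j)\<^sup>2)"
  have a_nz: "a i j \<noteq> 0" for i j
    using pos[of i] pos[of j] by (simp add: a_def)
  have a_sq: "(a i j)\<^sup>2 = deg w i * deg w j" for i j
    using pos[of i] pos[of j] by (simp add: a_def)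
  have "margin_loss w M f =
      (frob_norm ((norm_adj w - norm_margin w M) - emb_mat w f ** transpose (emb_mat w f)))\<^sup>2 + C"
    for f :: "'x \<Rightarrow> real^'k"
  proof -
    have "(frob_norm ((norm_adj w - norm_margin w M) - emb_mat w f ** transpose (emb_mat w f)))\<^sup>2
        = (\<Sum>i\<in>UNIV. \<Sum>j\<in>UNIV. (w i j / a i j - a i j * M i j - a i j * (f i \<bullet> f j))\<^sup>2)"
      using pos by (simp add: frob_norm_power2 norm_adj_nth norm_margin_nth emb_mat_gram_nth
          a_def less_imp_le)
    also have "\<dots> = margin_loss w M f - C"
      by (simp add: square_residual_eq[OF a_nz] a_sq margin_loss_def C_def sum.distrib
          sum_distrib_left sum_subtractf sum_negf)
    finally show ?thesis by simp
  qed
  then show ?thesis by blast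
qed

end
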